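(* If Assumptions 1 and 3 hold, there exists $\nu_{\rm SMON}$ such that $F_\nu$ is strongly monotone on $\mathcal{X}$ for all $\nu>\nu_{\rm SMON}$.
   Context: Let $N,n$ be positive integers; for $i\in\{1,\dots,N\}$, $\mathcal{X}^i\subset\mathbb{R}^n$ is convex, compact with non-empty interior; $\mathcal{X}=\mathcal{X}^1\times\dots\times\mathcal{X}^N$, $x=[x^1;\dots;x^N]$. Costs $J^i(z_1,z_2):\mathcal{X}^i\times\mathrm{conv}(\mathcal{X}^1,\dots,\mathcal{X}^N)\to\mathbb{R}$ are continuously differentiable, with $x^i\mapsto J^i(x^i,\frac1N\sum_jx^j)$ convex for each fixed $x^{-i}$. $T\in[0,1]^{N\times N}$. Define $\sigma_\infty(x)=\frac1N\sum_jx^j$, $\sigma^i_\nu(x)=\sum_j[T^\nu]_{ij}x^j$, $F_\infty(x)=[\nabla_{z_1}J^i(x^i,\sigma_\infty(x))+\frac1N\nabla_{z_2}J^i(x^i,\sigma_\infty(x))]_{i=1}^N$ (the gradient in $x^i$ of $x^i\mapsto J^i(x^i,\sigma_\infty(x))$), and $F_\nu(x)=[\nabla_{z_1}J^i(x^i,\sigma^i_\nu(x))+[T^\nu]_{ii}\nabla_{z_2}J^i(x^i,\sigma^i_\nu(x))]_{i=1}^N$. An operator $H$ is strongly monotone on $\mathcal{X}$ if there is $\alpha>0$ with $(H(x)-H(y))^\top(x-y)\ge\alpha\|x-y\|^2$ for all $x,y\in\mathcal{X}$. Assumption 1: $T$ is primitive and doubly stochastic. Assumption 3: each $J^i$ is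 twice continuously differentiable and $F_\infty$ is strongly monotone on $\mathcal{X}$. *)

theory Defs
  imports "HOL-Analysis.Analysis"
begin

text \<open>Agents are indexed by a finite type 'i (N = CARD('i)); each local decision
 lives in real^'n (n = CARD('n)). A profile x is real^'n^'i, x $ i = x^i.\<close>

definition matpow :: "real^'i^'i \<Rightarrow> nat \<Rightarrow> real^'i^'i" where
  "matpow T k = ((\<lambda>A. T ** A) ^^ k) (mat 1)"

definition doubly_stochastic :: "real^'i^'i \<Rightarrow> bool" where
  "doubly_stochastic T \<longleftrightarrow> (\<forall>i j. T $ i $ j \<ge> 0)
     \<and> (\<forall>i. (\<Sum>j\<in>UNIV. T $ i $ j) = 1) \<and> (\<forall>j. (\<Sum>i\<in>UNIV. T $ i $ j) = 1)"

definition primitive :: "real^'i^'i \<Rightarrow> bool" where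
  "primitive T \<longleftrightarrow> (\<forall>i j. T $ i $ j \<ge> 0) \<and> (\<exists>k. \<forall>i j. matpow T k $ i $ j > 0)"

definition strongly_monotone_on :: "'a::real_inner set \<Rightarrow> ('a \<Rightarrow> 'a) \<Rightarrow> bool" where
  "strongly_monotone_on S H \<longleftrightarrow>
     (\<exists>\<alpha>>0. \<forall>x\<in>S. \<forall>y\<in>S. (H x - H y) \<bullet> (x - y) \<ge> \<alpha> * (norm (x - y))\<^sup>2)"

definition C1_grad_on :: "'a::real_inner set \<Rightarrow> ('a \<Rightarrow> real) \<Rightarrow> ('a \<Rightarrow> 'a) \<Rightarrow> bool" where
  "C1_grad_on S f g \<longleftrightarrow>
     (\<forall>z\<in>S. (f has_derivative (\<lambda>h. g z \<bullet> h)) (at z within S)) \<and> continuous_on S g"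

definition C1_map_on :: "'a::real_normed_vector set \<Rightarrow> ('a \<Rightarrow> 'b::real_normed_vector) \<Rightarrow> bool" where
  "C1_map_on S g \<longleftrightarrow> (\<exists>g'. (\<forall>z\<in>S. (g has_derivative blinfun_apply (g' z)) (at z within S))
                         \<and> continuous_on S g')"

definition sigma_inf :: "real^'n^'i \<Rightarrow> real^'n" where
  "sigma_inf x = (1 / real CARD('i)) *\<^sub>R (\<Sum>j\<in>UNIV. x $ j)"

definition sigma_nu :: "real^'i^'i \<Rightarrow> nat \<Rightarrow> real^'n^'i \<Rightarrow> 'i \<Rightarrow> real^'n" where
  "sigma_nu T \<nu> x i = (\<Sum>j\<in>UNIV. matpow T \<nu> $ i $ j *\<^sub>R x $ j)"

text \<open>G i (z1,z2) = (grad_{z1} J^i, grad_{z2} J^i).\<close>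
definition F_inf :: "('i \<Rightarrow> (real^'n) \<times> (real^'n) \<Rightarrow> (real^'n) \<times> (real^'n)) \<Rightarrow> real^'n^'i \<Rightarrow> real^'n^'i" where
  "F_inf G x = (\<chi> i. fst (G i (x $ i, sigma_inf x))
                     + (1 / real CARD('i)) *\<^sub>R snd (G i (x $ i, sigma_inf x)))"

definition F_nu :: "real^'i^'i \<Rightarrow> nat \<Rightarrow> ('i \<Rightarrow> (real^'n) \<times> (real^'n) \<Rightarrow> (real^'n) \<times> (real^'n))
                    \<Rightarrow> real^'n^'i \<Rightarrow> real^'n^'i" where
  "F_nu T \<nu> G x = (\<chi> i. fst (G i (x $ i, sigma_nu T \<nu> x i))
                     + matpow T \<nu> $ i $ i *\<^sub>R snd (G i (x $ i, sigma_nu T \<nu> x i)))"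

end

theory Submission
  imports Defs
begin

text \<open>Both operators are instances of one pseudo-gradient F(M) parametrised by an aggregation
  matrix M: F_nu = F(T^nu) and F_inf = F(E) with E the averaging matrix. Since T is primitive and
  doubly stochastic, T^nu tends to E: a power T^k whose entries are at least gamma > 0 shrinks the
  spread of every column by the factor 1 - gamma, and the column sums 1 pin the limit to 1/N.
  Agent i sees a profile x only through the linear map x \<mapsto> (x^i, \<Sum>j. M i j x^j); by the mean
  value inequality and uniform continuity of the derivative of G i on the compact set Xs i \<times> C,
  F(M) - F(M') is Lipschitz on X with a constant tending to 0 as M' approaches M. Once that constant
  is below alpha/2, F_nu is strongly monotone with constant alpha/2.\<close>

definition row_stochastic :: "real^'i^'i \<Rightarrow> bool" where
  "row_stochastic M \<longleftrightarrow> (\<forall>i j. 0 \<le> M $ i $ j) \<and> (\<forall>i. (\<Sum>j\<in>UNIV. M $ i $ j) = 1)"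

definition column_sums_one :: "real^'i^'i \<Rightarrow> bool" where
  "column_sums_one M \<longleftrightarrow> (\<forall>j. (\<Sum>i\<in>UNIV. M $ i $ j) = 1)"

definition averaging_matrix :: "real^'i::finite^'i" where
  "averaging_matrix = (\<chi> i j. 1 / real CARD('i))"

lemma doubly_stochastic_iff:
  "doubly_stochastic T \<longleftrightarrow> row_stochastic T \<and> column_sums_one T"
  unfolding doubly_stochastic_def row_stochastic_def column_sums_one_def by blast

lemma matpow_0 [simp]: "matpow T 0 = mat 1"
  by (simp add: matpow_def)

lemma matpow_Suc: "matpow T (Suc k) = T ** matpow T k"
  by (simp add: matpow_def)

lemma matpow_add: "matpow T (a + b) = matpow T a ** matpow T b"
  by (induction a) (simp_all add: matpow_Suc matrix_mul_lid matrix_mul_assoc)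

lemma row_stochastic_mat_1: "row_stochastic (mat 1 :: real^'i::finite^'i)"
  unfolding row_stochastic_def mat_def by (simp add: if_distrib)

lemma column_sums_one_mat_1: "column_sums_one (mat 1 :: real^'i::finite^'i)"
  unfolding column_sums_one_def mat_def by (simp add: if_distrib)

lemma row_stochastic_mult:
  "row_stochastic A \<Longrightarrow> row_stochastic B \<Longrightarrow> row_stochastic (A ** B)"
  unfolding row_stochastic_def matrix_matrix_mult_def
  by (simp add: sum_nonneg sum.swap[of _ UNIV UNIV] flip: sum_distrib_left)

lemma column_sums_one_mult:
  "column_sums_one A \<Longrightarrow> column_sums_one B \<Longrightarrow> column_sums_one (A ** B)"
  unfolding column_sums_one_def matrix_matrix_mult_def
  by (simp add: sum.swap[of _ UNIV UNIV] flip: sum_distrib_right)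

lemma row_stochastic_matpow: "row_stochastic T \<Longrightarrow> row_stochastic (matpow T k)"
  by (induction k) (simp_all add: matpow_Suc row_stochastic_mat_1 row_stochastic_mult)

lemma column_sums_one_matpow: "column_sums_one T \<Longrightarrow> column_sums_one (matpow T k)"
  by (induction k) (simp_all add: matpow_Suc column_sums_one_mat_1 column_sums_one_mult)

lemma row_stochastic_le_1:
  assumes "row_stochastic M"
  shows "M $ i $ j \<le> 1"
proof -
  have "M $ i $ j \<le> (\<Sum>j\<in>UNIV. M $ i $ j)"
    by (rule member_le_sum) (use assms in \<open>auto simp: row_stochastic_def\<close>)
  then show ?thesis
    using assms by (simp add: row_stochastic_def)
qed

lemma row_stochastic_averaging_matrix: "row_stochastic (averaging_matrix :: real^'i::finite^'i)"
  unfolding row_stochastic_def averaging_matrix_def by simp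

lemma row_stochastic_mult_column_bounds:
  assumes "row_stochastic Q" and "\<And>l. a \<le> B $ l $ j \<and> B $ l $ j \<le> b"
  shows "a \<le> (Q ** B) $ i $ j \<and> (Q ** B) $ i $ j \<le> b"
proof -
  have sum1: "(\<Sum>l\<in>UNIV. Q $ i $ l) = 1" and nonneg: "\<And>l. 0 \<le> Q $ i $ l"
    using assms(1) by (auto simp: row_stochastic_def)
  have "(\<Sum>l\<in>UNIV. Q $ i $ l * a) \<le> (\<Sum>l\<in>UNIV. Q $ i $ l * B $ l $ j)"
    and "(\<Sum>l\<in>UNIV. Q $ i $ l * B $ l $ j) \<le> (\<Sum>l\<in>UNIV. Q $ i $ l * b)"
    by (intro sum_mono mult_left_mono; simp add: assms(2) nonneg)+
  then show ?thesis
    unfolding matrix_matrix_mult_def by (simp add: sum1 flip: sum_distrib_right)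
qed

lemma row_stochastic_mult_column_contract:
  assumes "row_stochastic Q" and "\<And>i l. \<gamma> \<le> Q $ i $ l"
    and "\<And>l. a \<le> B $ l $ j \<and> B $ l $ j \<le> b"
  shows "a + \<gamma> * (B $ l0 $ j - a) \<le> (Q ** B) $ i $ j
    \<and> (Q ** B) $ i $ j \<le> b - \<gamma> * (b - B $ l0 $ j)"
proof -
  have sum1: "(\<Sum>l\<in>UNIV. Q $ i $ l) = 1" and nonneg: "\<And>l. 0 \<le> Q $ i $ l"
    using assms(1) by (auto simp: row_stochastic_def)
  have upper: "b - (Q ** B) $ i $ j = (\<Sum>l\<in>UNIV. Q $ i $ l * (b - B $ l $ j))"
    and lower: "(Q ** B) $ i $ j - a = (\<Sum>l\<in>UNIV. Q $ i $ l * (B $ l $ j - a))"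
    unfolding matrix_matrix_mult_def
    by (simp_all add: right_diff_distrib sum_subtractf sum1 flip: sum_distrib_right)
  have "\<gamma> * (b - B $ l0 $ j) \<le> Q $ i $ l0 * (b - B $ l0 $ j)"
    and "\<gamma> * (B $ l0 $ j - a) \<le> Q $ i $ l0 * (B $ l0 $ j - a)"
    by (intro mult_right_mono; simp add: assms)+
  moreover have "Q $ i $ l0 * (b - B $ l0 $ j) \<le> (\<Sum>l\<in>UNIV. Q $ i $ l * (b - B $ l $ j))"
    and "Q $ i $ l0 * (B $ l0 $ j - a) \<le> (\<Sum>l\<in>UNIV. Q $ i $ l * (B $ l $ j - a))"
    by (intro member_le_sum; simp add: nonneg assms(3))+
  ultimately show ?thesis
    using upper lower by linarith
qed

lemma matpow_column_bounds:
  assumes "row_stochastic T" and "\<And>l. a \<le> matpow T n $ l $ j \<and> matpow T n $ l $ j \<le> b"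
    and "n \<le> \<nu>"
  shows "a \<le> matpow T \<nu> $ l $ j \<and> matpow T \<nu> $ l $ j \<le> b"
  using assms(3)
proof (induction \<nu> arbitrary: l rule: dec_induct)
  case base
  then show ?case using assms(2) by simp
next
  case (step \<nu>)
  then show ?case
    using row_stochastic_mult_column_bounds[OF assms(1), of a "matpow T \<nu>" j b]
    by (simp add: matpow_Suc)
qed

lemma matpow_column_spread:
  assumes "row_stochastic T" and pos: "\<And>i j. \<gamma> \<le> matpow T k $ i $ j"
  shows "\<exists>a b. b - a \<le> (1 - \<gamma>) ^ m
    \<and> (\<forall>l. a \<le> matpow T (m * k) $ l $ j \<and> matpow T (m * k) $ l $ j \<le> b)"
proof (induction m)
  case 0
  show ?case
    using row_stochastic_le_1[OF row_stochastic_mat_1]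
    by (intro exI[of _ 0] exI[of _ 1]) (auto simp: mat_def)
next
  case (Suc m)
  then obtain a b where len: "b - a \<le> (1 - \<gamma>) ^ m"
    and bounds: "\<And>l. a \<le> matpow T (m * k) $ l $ j \<and> matpow T (m * k) $ l $ j \<le> b"
    by blast
  define c where "c = matpow T (m * k) $ undefined $ j"
  have "\<gamma> \<le> 1"
    using pos row_stochastic_le_1[OF row_stochastic_matpow[OF assms(1)]] order_trans by blast
  moreover have "a \<le> c" "c \<le> b"
    using bounds by (auto simp: c_def)
  ultimately have "(b - \<gamma> * (b - c)) - (a + \<gamma> * (c - a)) \<le> (1 - \<gamma>) ^ Suc m"
    using mult_left_mono[OF len, of "1 - \<gamma>"] by (simp add: algebra_simps)
  moreover have "\<forall>l. a + \<gamma> * (c - a) \<le> matpow T (Suc m * k) $ l $ j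
      \<and> matpow T (Suc m * k) $ l $ j \<le> b - \<gamma> * (b - c)"
    using row_stochastic_mult_column_contract[OF row_stochastic_matpow[OF assms(1)] pos bounds]
    by (simp add: c_def matpow_add)
  ultimately show ?case by blast
qed

lemma bounds_enclose_average:
  fixes v :: "'i::finite \<Rightarrow> real"
  assumes "(\<Sum>l\<in>UNIV. v l) = 1" and "\<And>l. a \<le> v l \<and> v l \<le> b"
  shows "a \<le> 1 / real CARD('i) \<and> 1 / real CARD('i) \<le> b"
proof -
  have "(\<Sum>l\<in>(UNIV::'i set). a) \<le> (\<Sum>l\<in>UNIV. v l)" and "(\<Sum>l\<in>UNIV. v l) \<le> (\<Sum>l\<in>(UNIV::'i set). b)"
    by (intro sum_mono; simp add: assms(2))+
  then show ?thesis
    using assms(1) by (simp add: field_simps)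
qed

lemma matpow_tendsto_averaging_matrix:
  fixes T :: "real^'i::finite^'i"
  assumes "doubly_stochastic T" and "\<exists>k. \<forall>i j. 0 < matpow T k $ i $ j"
  shows "(\<lambda>\<nu>. matpow T \<nu>) \<longlonglongrightarrow> averaging_matrix"
proof -
  have row: "row_stochastic T" and col: "column_sums_one T"
    using assms(1) by (auto simp: doubly_stochastic_iff)
  obtain k where kpos: "\<And>i j. 0 < matpow T k $ i $ j"
    using assms(2) by blast
  define \<gamma> where "\<gamma> = Min (range (\<lambda>(i, j). matpow T k $ i $ j))"
  have \<gamma>_le: "\<gamma> \<le> matpow T k $ i $ j" for i j
    unfolding \<gamma>_def by (rule Min_le) auto
  have "\<gamma> > 0"
    unfolding \<gamma>_def using kpos by (auto simp: Min_gr_iff)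
  have "(\<lambda>\<nu>. matpow T \<nu> $ i $ j) \<longlonglongrightarrow> 1 / real CARD('i)" for i j
  proof (rule LIMSEQ_I)
    fix r :: real
    assume "0 < r"
    then obtain m where m: "(1 - \<gamma>) ^ m < r"
      using real_arch_pow_inv[of r "1 - \<gamma>"] \<open>\<gamma> > 0\<close> by auto
    obtain a b where ab: "b - a \<le> (1 - \<gamma>) ^ m"
      and bounds: "\<And>l. a \<le> matpow T (m * k) $ l $ j \<and> matpow T (m * k) $ l $ j \<le> b"
      using matpow_column_spread[OF row \<gamma>_le] by blast
    have "norm (matpow T \<nu> $ i $ j - 1 / real CARD('i)) < r" if "m * k \<le> \<nu>" for \<nu>
    proof -
      have "\<And>l. a \<le> matpow T \<nu> $ l $ j \<and> matpow T \<nu> $ l $ j \<le> b"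
        using matpow_column_bounds[OF row bounds that] .
      moreover from this have "a \<le> 1 / real CARD('i) \<and> 1 / real CARD('i) \<le> b"
        using column_sums_one_matpow[OF col, of \<nu>]
        by (intro bounds_enclose_average[of "\<lambda>l. matpow T \<nu> $ l $ j"]) (auto simp: column_sums_one_def)
      ultimately show ?thesis
        using ab m by (smt (verit) real_norm_def)
    qed
    then show "\<exists>no. \<forall>\<nu>\<ge>no. norm (matpow T \<nu> $ i $ j - 1 / real CARD('i)) < r"
      by blast
  qed
  then show ?thesis
    unfolding averaging_matrix_def by (intro vec_tendstoI) simp
qed

context
  fixes g :: "'c::real_normed_vector \<Rightarrow> 'd::real_normed_vector"
    and g' :: "'c \<Rightarrow> 'c \<Rightarrow>\<^sub>L 'd" and K :: "'c set"
  assumes g_deriv: "\<And>z. z \<in> K \<Longrightarrow> (g has_derivative blinfun_apply (g' z)) (at z within K)"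
begin

lemma has_derivative_compose_blinfun:
  fixes P :: "'a::real_normed_vector \<Rightarrow>\<^sub>L 'c"
  assumes "\<forall>z\<in>S. P z \<in> K" and "x \<in> S"
  shows "((\<lambda>z. g (P z)) has_derivative blinfun_apply (g' (P x) o\<^sub>L P)) (at x within S)"
proof -
  have "((\<lambda>z. g (P z)) has_derivative (\<lambda>h. g' (P x) (P h))) (at x within S)"
    by (rule has_derivative_in_compose2[where t = K])
      (use assms g_deriv in \<open>auto intro: bounded_linear.has_derivative[OF blinfun.bounded_linear_right] has_derivative_ident\<close>)
  then show ?thesis
    by (simp add: blinfun_compose.rep_eq o_def)
qed

lemma lipschitz_compose_blinfun:
  fixes P :: "'a::real_normed_vector \<Rightarrow>\<^sub>L 'c"
  assumes "convex S" and "\<forall>z\<in>S. P z \<in> K" and "\<forall>z\<in>K. norm (g' z) \<le> B"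
    and "x \<in> S" and "y \<in> S"
  shows "norm (g (P x) - g (P y)) \<le> B * norm P * norm (x - y)"
proof (rule differentiable_bound[OF assms(1) has_derivative_compose_blinfun[OF assms(2)]])
  fix z assume "z \<in> S"
  then have "norm (g' (P z) o\<^sub>L P) \<le> B * norm P"
    using norm_blinfun_compose[of "g' (P z)" P] assms(2,3) by (meson mult_right_mono norm_ge_zero order_trans)
  then show "onorm (blinfun_apply (g' (P z) o\<^sub>L P)) \<le> B * norm P"
    by (simp add: norm_blinfun.rep_eq)
qed (use assms in auto)

lemma lipschitz_compose_blinfun_diff:
  fixes P Q :: "'a::real_normed_vector \<Rightarrow>\<^sub>L 'c"
  assumes "convex S" and "\<forall>z\<in>S. P z \<in> K" and "\<forall>z\<in>S. Q z \<in> K"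
    and "\<forall>z\<in>K. norm (g' z) \<le> B" and "\<forall>z\<in>S. norm (g' (P z) - g' (Q z)) \<le> \<eta>"
    and "x \<in> S" and "y \<in> S"
  shows "norm (g (P x) - g (Q x) - (g (P y) - g (Q y))) \<le> (\<eta> * norm P + B * norm (P - Q)) * norm (x - y)"
proof -
  have "norm ((\<lambda>z. g (P z) - g (Q z)) x - (\<lambda>z. g (P z) - g (Q z)) y)
      \<le> (\<eta> * norm P + B * norm (P - Q)) * norm (x - y)"
  proof (rule differentiable_bound[OF assms(1) has_derivative_diff[OF
          has_derivative_compose_blinfun[OF assms(2)] has_derivative_compose_blinfun[OF assms(3)]]])
    fix z assume z: "z \<in> S"
    have split: "(g' (P z) o\<^sub>L P) - (g' (Q z) o\<^sub>L Q) = ((g' (P z) - g' (Q z)) o\<^sub>L P) + (g' (Q z) o\<^sub>L (P - Q))"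
      by (rule blinfun_eqI) (simp add: blinfun.bilinear_simps)
    have "norm ((g' (P z) - g' (Q z)) o\<^sub>L P) \<le> \<eta> * norm P"
      using norm_blinfun_compose[of "g' (P z) - g' (Q z)" P] assms(5) z
      by (meson mult_right_mono norm_ge_zero order_trans)
    moreover have "norm (g' (Q z) o\<^sub>L (P - Q)) \<le> B * norm (P - Q)"
      using norm_blinfun_compose[of "g' (Q z)" "P - Q"] assms(3,4) z
      by (meson mult_right_mono norm_ge_zero order_trans)
    ultimately have "norm ((g' (P z) o\<^sub>L P) - (g' (Q z) o\<^sub>L Q)) \<le> \<eta> * norm P + B * norm (P - Q)"
      unfolding split by (meson add_mono norm_triangle_le)
    moreover have "(\<lambda>h. blinfun_apply (g' (P z) o\<^sub>L P) h - blinfun_apply (g' (Q z) o\<^sub>L Q) h)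
        = blinfun_apply ((g' (P z) o\<^sub>L P) - (g' (Q z) o\<^sub>L Q))"
      by (simp add: fun_eq_iff blinfun.diff_left)
    ultimately show "onorm (\<lambda>h. blinfun_apply (g' (P z) o\<^sub>L P) h - blinfun_apply (g' (Q z) o\<^sub>L Q) h)
        \<le> \<eta> * norm P + B * norm (P - Q)"
      by (simp only: norm_blinfun.rep_eq)
  qed (use assms in auto)
  then show ?thesis by simp
qed

end

definition local_view :: "real^'i^'i \<Rightarrow> 'i \<Rightarrow> (real^'n^'i) \<Rightarrow>\<^sub>L ((real^'n) \<times> (real^'n))" where
  "local_view M i = Blinfun (\<lambda>x. (x $ i, \<Sum>j\<in>UNIV. M $ i $ j *\<^sub>R x $ j))"

definition pseudo_gradient ::
    "real^'i^'i \<Rightarrow> ('i \<Rightarrow> (real^'n) \<times> (real^'n) \<Rightarrow> (real^'n) \<times> (real^'n)) \<Rightarrow> real^'n^'i \<Rightarrow> real^'n^'i" where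
  "pseudo_gradient M G x =
     (\<chi> i. fst (G i (local_view M i x)) + M $ i $ i *\<^sub>R snd (G i (local_view M i x)))"

lemma local_view_apply:
  fixes M :: "real^'i::finite^'i"
  shows "local_view M i x = (x $ i, \<Sum>j\<in>UNIV. M $ i $ j *\<^sub>R x $ j)"
proof -
  have linear: "bounded_linear (\<lambda>x::real^'n^'i. (x $ i, \<Sum>j\<in>UNIV. M $ i $ j *\<^sub>R x $ j))"
    by (intro bounded_linear_Pair bounded_linear_vec_nth bounded_linear_sum
        bounded_linear_compose[OF bounded_linear_scaleR_right bounded_linear_vec_nth])
  show ?thesis
    unfolding local_view_def bounded_linear_Blinfun_apply[OF linear] ..
qed

lemma local_view_mem_Times_convex_hull:
  assumes "row_stochastic M" and "\<forall>j. x $ j \<in> S j"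
  shows "local_view M i x \<in> S i \<times> (convex hull (\<Union>j. S j))"
proof -
  have "(\<Sum>j\<in>UNIV. M $ i $ j *\<^sub>R x $ j) \<in> convex hull (\<Union>j. S j)"
    using assms hull_subset[of "\<Union>j. S j" convex]
    by (intro convex_sum) (auto simp: row_stochastic_def)
  then show ?thesis
    using assms(2) by (simp add: local_view_apply)
qed

lemma F_nu_eq_pseudo_gradient: "F_nu T \<nu> G = pseudo_gradient (matpow T \<nu>) G"
  by (rule ext) (simp add: F_nu_def pseudo_gradient_def local_view_apply sigma_nu_def)

lemma F_inf_eq_pseudo_gradient: "F_inf G = pseudo_gradient averaging_matrix G"
  by (rule ext)
    (simp add: F_inf_def pseudo_gradient_def local_view_apply sigma_inf_def averaging_matrix_def
      scaleR_sum_right)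

lemma norm_weighted_sum_le:
  fixes x :: "'a::real_normed_vector^'i::finite"
  assumes "\<And>j. \<bar>c j\<bar> \<le> \<delta>"
  shows "norm (\<Sum>j\<in>UNIV. c j *\<^sub>R x $ j) \<le> real CARD('i) * \<delta> * norm x"
proof -
  have "norm (\<Sum>j\<in>UNIV. c j *\<^sub>R x $ j) \<le> (\<Sum>j\<in>UNIV. norm (c j *\<^sub>R x $ j))"
    by (rule norm_sum)
  also have "\<dots> \<le> (\<Sum>j\<in>(UNIV::'i set). \<delta> * norm x)"
    using order_trans[OF abs_ge_zero assms]
    by (intro sum_mono) (auto intro!: mult_mono Finite_Cartesian_Product.norm_nth_le simp: assms)
  finally show ?thesis by simp
qed

lemma norm_local_view_le:
  assumes "row_stochastic M"
  shows "norm (local_view M i :: (real^'n::finite^'i::finite) \<Rightarrow>\<^sub>L _) \<le> 1 + real CARD('i)"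
proof (rule norm_blinfun_bound)
  fix x :: "real^'n^'i"
  have "\<bar>M $ i $ j\<bar> \<le> 1" for j
    using assms row_stochastic_le_1[OF assms] by (simp add: row_stochastic_def)
  then have "norm (\<Sum>j\<in>UNIV. M $ i $ j *\<^sub>R x $ j) \<le> real CARD('i) * norm x"
    using norm_weighted_sum_le[of "\<lambda>j. M $ i $ j" 1 x] by simp
  then show "norm (local_view M i x) \<le> (1 + real CARD('i)) * norm x"
    unfolding local_view_apply
    using norm_Pair_le[of "x $ i"] Finite_Cartesian_Product.norm_nth_le[of x i]
    by (smt (verit, best) distrib_right mult_cancel_right2)
qed simp

lemma norm_local_view_diff_le:
  assumes "\<And>j. \<bar>M $ i $ j - M' $ i $ j\<bar> \<le> \<delta>" and "0 \<le> \<delta>"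
  shows "norm (local_view M i - local_view M' i :: (real^'n::finite^'i::finite) \<Rightarrow>\<^sub>L _)
    \<le> real CARD('i) * \<delta>"
proof (rule norm_blinfun_bound)
  fix x :: "real^'n^'i"
  have "blinfun_apply (local_view M i - local_view M' i) x
      = (0, \<Sum>j\<in>UNIV. (M $ i $ j - M' $ i $ j) *\<^sub>R x $ j)"
    by (simp add: blinfun.diff_left local_view_apply scaleR_diff_left sum_subtractf)
  then show "norm (blinfun_apply (local_view M i - local_view M' i) x) \<le> real CARD('i) * \<delta> * norm x"
    using norm_weighted_sum_le[of "\<lambda>j. M $ i $ j - M' $ i $ j" \<delta> x, OF assms(1)]
    by (simp add: norm_Pair)
qed (use assms in simp)

lemma pseudo_gradient_component_diff_le:
  fixes G :: "'i::finite \<Rightarrow> (real^'n::finite) \<times> (real^'n) \<Rightarrow> (real^'n) \<times> (real^'n)"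
    and X :: "(real^'n^'i) set"
  assumes deriv: "\<And>z. z \<in> K \<Longrightarrow> (G i has_derivative blinfun_apply (g' z)) (at z within K)"
    and B: "\<forall>z\<in>K. norm (g' z) \<le> B" and "0 \<le> B" and "0 \<le> \<eta>" and "convex X"
    and M: "row_stochastic M" and M': "row_stochastic M'"
    and PK: "\<forall>z\<in>X. local_view M i z \<in> K" and QK: "\<forall>z\<in>X. local_view M' i z \<in> K"
    and close: "\<forall>j. \<bar>M $ i $ j - M' $ i $ j\<bar> \<le> \<delta>"
    and g'_close: "\<forall>z\<in>X. norm (g' (local_view M i z) - g' (local_view M' i z)) \<le> \<eta>"
    and "x \<in> X" and "y \<in> X"
  shows "norm ((pseudo_gradient M G x - pseudo_gradient M' G x) $ i
      - (pseudo_gradient M G y - pseudo_gradient M' G y) $ i)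
    \<le> (2 * \<eta> * (1 + real CARD('i)) + \<delta> * (B * (3 * real CARD('i) + 1))) * norm (x - y)"
proof -
  define N where "N = real CARD('i)"
  define P where "P = (local_view M i :: (real^'n^'i) \<Rightarrow>\<^sub>L _)"
  define Q where "Q = (local_view M' i :: (real^'n^'i) \<Rightarrow>\<^sub>L _)"
  define t where "t = norm (x - y)"
  define u where "u = G i (P x) - G i (Q x) - (G i (P y) - G i (Q y))"
  define w where "w = G i (Q x) - G i (Q y)"
  have "0 \<le> \<delta>"
    using close abs_ge_zero order_trans by blast
  have nP: "norm P \<le> 1 + N" and nQ: "norm Q \<le> 1 + N"
    unfolding P_def Q_def N_def using M M' by (auto intro: norm_local_view_le)
  have nPQ: "norm (P - Q) \<le> N * \<delta>"
    unfolding P_def Q_def N_def using close \<open>0 \<le> \<delta>\<close> by (auto intro: norm_local_view_diff_le)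
  have "norm u \<le> (\<eta> * norm P + B * norm (P - Q)) * t"
    unfolding u_def t_def P_def Q_def
    by (rule lipschitz_compose_blinfun_diff[where g' = g'])
      (use deriv \<open>convex X\<close> PK QK B g'_close \<open>x \<in> X\<close> \<open>y \<in> X\<close> in auto)
  also have "\<dots> \<le> (\<eta> * (1 + N) + B * (N * \<delta>)) * t"
    using nP nPQ \<open>0 \<le> \<eta>\<close> \<open>0 \<le> B\<close> by (auto simp: t_def intro!: mult_right_mono add_mono mult_left_mono)
  finally have u: "norm u \<le> (\<eta> * (1 + N) + B * (N * \<delta>)) * t" .
  have "norm w \<le> B * norm Q * t"
    unfolding w_def t_def Q_def
    by (rule lipschitz_compose_blinfun[where g' = g']) (use deriv \<open>convex X\<close> QK B \<open>x \<in> X\<close> \<open>y \<in> X\<close> in auto)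
  also have "\<dots> \<le> B * (1 + N) * t"
    using nQ \<open>0 \<le> B\<close> by (auto simp: t_def intro!: mult_right_mono mult_left_mono)
  finally have w: "norm w \<le> B * (1 + N) * t" .
  have "(pseudo_gradient M G x - pseudo_gradient M' G x) $ i - (pseudo_gradient M G y - pseudo_gradient M' G y) $ i
      = fst u + M $ i $ i *\<^sub>R snd u + (M $ i $ i - M' $ i $ i) *\<^sub>R snd w"
    unfolding pseudo_gradient_def u_def w_def P_def Q_def by (simp add: algebra_simps)
  also have "norm \<dots> \<le> norm (fst u) + \<bar>M $ i $ i\<bar> * norm (snd u) + \<bar>M $ i $ i - M' $ i $ i\<bar> * norm (snd w)"
    by (metis norm_scaleR norm_triangle_le norm_triangle_ineq add_mono order_refl)
  also have "\<dots> \<le> norm u + 1 * norm u + \<delta> * norm w"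
    using row_stochastic_le_1[OF M] M close norm_fst_le[of "fst u" "snd u"] norm_snd_le[of "snd u" "fst u"]
      norm_snd_le[of "snd w" "fst w"]
    by (intro add_mono mult_mono) (auto simp: row_stochastic_def)
  also have "\<dots> \<le> (2 * \<eta> * (1 + N) + \<delta> * (B * (3 * N + 1))) * t"
    using u mult_left_mono[OF w \<open>0 \<le> \<delta>\<close>] by (simp add: algebra_simps)
  finally show ?thesis
    by (simp add: t_def N_def)
qed

lemma pseudo_gradient_component_perturbation:
  fixes X :: "(real^'n::finite^'i::finite) set"
    and G :: "'i \<Rightarrow> (real^'n) \<times> (real^'n) \<Rightarrow> (real^'n) \<times> (real^'n)"
  assumes "convex X" and "bounded X" and "compact K" and "C1_map_on K (G i)"
    and views: "\<And>M x. row_stochastic M \<Longrightarrow> x \<in> X \<Longrightarrow> local_view M i x \<in> K"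
    and "\<epsilon> > 0"
  shows "\<exists>\<delta>>0. \<forall>M M'. row_stochastic M \<longrightarrow> row_stochastic M' \<longrightarrow> (\<forall>j. \<bar>M $ i $ j - M' $ i $ j\<bar> \<le> \<delta>) \<longrightarrow>
    (\<forall>x\<in>X. \<forall>y\<in>X. norm ((pseudo_gradient M G x - pseudo_gradient M' G x) $ i
        - (pseudo_gradient M G y - pseudo_gradient M' G y) $ i) \<le> \<epsilon> * norm (x - y))"
proof -
  obtain g' where deriv: "\<And>z. z \<in> K \<Longrightarrow> (G i has_derivative blinfun_apply (g' z)) (at z within K)"
    and "continuous_on K g'"
    using assms(4) unfolding C1_map_on_def by blast
  then have "bounded (g' ` K)" and unif: "uniformly_continuous_on K g'"
    using assms(3) by (auto intro: compact_imp_bounded compact_continuous_image compact_uniformly_continuous)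
  then obtain B where "B > 0" and B: "\<forall>z\<in>K. norm (g' z) \<le> B"
    unfolding bounded_pos by blast
  obtain R where "R > 0" and R: "\<And>x. x \<in> X \<Longrightarrow> norm x \<le> R"
    using assms(2) unfolding bounded_pos by blast
  define N where "N = real CARD('i)"
  define \<eta> where "\<eta> = \<epsilon> / (4 * (1 + N))"
  have "\<eta> > 0" and \<eta>: "2 * \<eta> * (1 + N) = \<epsilon> / 2"
    unfolding \<eta>_def N_def using \<open>\<epsilon> > 0\<close> by (auto simp: field_simps)
  obtain d where "d > 0" and d: "\<And>u v. u \<in> K \<Longrightarrow> v \<in> K \<Longrightarrow> dist v u < d \<Longrightarrow> dist (g' v) (g' u) < \<eta>"
    using unif \<open>\<eta> > 0\<close> unfolding uniformly_continuous_on_def by metis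
  have "((\<lambda>\<delta>. N * \<delta> * R) \<longlongrightarrow> 0) (at_right 0)" and "((\<lambda>\<delta>. \<delta> * (B * (3 * N + 1))) \<longlongrightarrow> 0) (at_right 0)"
    by (auto intro!: tendsto_eq_intros tendsto_ident_at)
  then have "\<forall>\<^sub>F \<delta> in at_right 0. 0 < \<delta> \<and> N * \<delta> * R < d \<and> \<delta> * (B * (3 * N + 1)) < \<epsilon> / 2"
    using \<open>d > 0\<close> \<open>\<epsilon> > 0\<close> by (intro eventually_conj eventually_at_right_less order_tendstoD(2)) auto
  then obtain \<delta> where "\<delta> > 0" and \<delta>R: "N * \<delta> * R < d" and \<delta>B: "\<delta> * (B * (3 * N + 1)) < \<epsilon> / 2"
    using eventually_happens'[OF trivial_limit_at_right_real] by blast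
  show ?thesis
  proof (intro exI[of _ \<delta>] conjI allI impI ballI \<open>\<delta> > 0\<close>)
    fix M M' :: "real^'i^'i" and x y
    assume M: "row_stochastic M" and M': "row_stochastic M'"
      and close: "\<forall>j. \<bar>M $ i $ j - M' $ i $ j\<bar> \<le> \<delta>" and "x \<in> X" and "y \<in> X"
    have g'_close: "norm (g' (local_view M i z) - g' (local_view M' i z)) \<le> \<eta>" if "z \<in> X" for z
    proof -
      have "norm (local_view M i z - local_view M' i z) \<le> N * \<delta> * norm z"
        using order_trans[OF norm_blinfun[of "local_view M i - local_view M' i" z]
            mult_right_mono[OF norm_local_view_diff_le[of M i M' \<delta>] norm_ge_zero]] close \<open>\<delta> > 0\<close>
        by (simp add: N_def blinfun.diff_left)
      also have "\<dots> \<le> N * \<delta> * R"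
        using R[OF that] \<open>\<delta> > 0\<close> by (simp add: N_def)
      finally show ?thesis
        using d[of "local_view M' i z" "local_view M i z"] views M M' that \<delta>R by (simp add: dist_norm)
    qed
    have "norm ((pseudo_gradient M G x - pseudo_gradient M' G x) $ i
        - (pseudo_gradient M G y - pseudo_gradient M' G y) $ i) \<le> (2 * \<eta> * (1 + N) + \<delta> * (B * (3 * N + 1))) * norm (x - y)"
      unfolding N_def
      by (rule pseudo_gradient_component_diff_le[where K = K and g' = g'])
        (use deriv B g'_close views M M' \<open>B > 0\<close> \<open>\<eta> > 0\<close> assms(1) close \<open>x \<in> X\<close> \<open>y \<in> X\<close> in auto)
    also have "\<dots> \<le> \<epsilon> * norm (x - y)"
      using \<eta> \<delta>B by (intro mult_right_mono) auto
    finally show "norm ((pseudo_gradient M G x - pseudo_gradient M' G x) $ i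
        - (pseudo_gradient M G y - pseudo_gradient M' G y) $ i) \<le> \<epsilon> * norm (x - y)" .
  qed
qed

lemma norm_vec_le_sum: "norm (x :: 'a::real_normed_vector^'i::finite) \<le> (\<Sum>i\<in>UNIV. norm (x $ i))"
  unfolding norm_vec_def by (rule L2_set_le_sum) simp

lemma bounded_vec_componentwise:
  assumes "\<And>i. bounded (S i)"
  shows "bounded {x :: 'a::real_normed_vector^'i::finite. \<forall>i. x $ i \<in> S i}"
proof -
  obtain r where r: "\<And>i z. z \<in> S i \<Longrightarrow> norm z \<le> r i"
    using assms unfolding bounded_iff by metis
  have "norm x \<le> (\<Sum>i\<in>UNIV. r i)" if "\<forall>i. x $ i \<in> S i" for x :: "'a^'i"
    using norm_vec_le_sum[of x] sum_mono[of UNIV "\<lambda>i. norm (x $ i)" r] r that by force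
  then show ?thesis
    unfolding bounded_iff by blast
qed

lemma abs_matrix_entry_le_norm: "\<bar>A $ i $ j\<bar> \<le> norm (A :: real^'j::finite^'i::finite)"
  using Finite_Cartesian_Product.norm_nth_le[of "A $ i" j] Finite_Cartesian_Product.norm_nth_le[of A i]
  by simp

lemma strongly_monotone_on_add_lipschitz:
  fixes H D :: "'a::real_inner \<Rightarrow> 'a"
  assumes "\<forall>x\<in>S. \<forall>y\<in>S. \<alpha> * (norm (x - y))\<^sup>2 \<le> (H x - H y) \<bullet> (x - y)"
    and "\<forall>x\<in>S. \<forall>y\<in>S. norm (D x - D y) \<le> L * norm (x - y)" and "L < \<alpha>"
  shows "strongly_monotone_on S (\<lambda>x. H x + D x)"
  unfolding strongly_monotone_on_def
proof (intro exI[of _ "\<alpha> - L"] conjI ballI)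
  fix x y assume "x \<in> S" "y \<in> S"
  have "\<bar>(D x - D y) \<bullet> (x - y)\<bar> \<le> norm (D x - D y) * norm (x - y)"
    by (rule Cauchy_Schwarz_ineq2)
  also have "\<dots> \<le> L * (norm (x - y))\<^sup>2"
    using mult_right_mono[OF bspec[OF bspec[OF assms(2) \<open>x \<in> S\<close>] \<open>y \<in> S\<close>] norm_ge_zero[of "x - y"]]
    by (simp add: power2_eq_square mult.assoc)
  moreover have "\<alpha> * (norm (x - y))\<^sup>2 \<le> (H x - H y) \<bullet> (x - y)"
    using assms(1) \<open>x \<in> S\<close> \<open>y \<in> S\<close> by blast
  moreover have "(H x + D x - (H y + D y)) \<bullet> (x - y) = (H x - H y) \<bullet> (x - y) + (D x - D y) \<bullet> (x - y)"
    by (metis add_diff_add inner_add_left)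
  ultimately show "(\<alpha> - L) * (norm (x - y))\<^sup>2 \<le> (H x + D x - (H y + D y)) \<bullet> (x - y)"
    by (simp add: left_diff_distrib)
qed (use assms(3) in simp)

lemma pseudo_gradient_perturbation:
  fixes X :: "(real^'n::finite^'i::finite) set"
    and G :: "'i \<Rightarrow> (real^'n) \<times> (real^'n) \<Rightarrow> (real^'n) \<times> (real^'n)"
  assumes "convex X" and "bounded X" and "\<And>i. compact (K i)" and "\<And>i. C1_map_on (K i) (G i)"
    and "\<And>M i x. row_stochastic M \<Longrightarrow> x \<in> X \<Longrightarrow> local_view M i x \<in> K i"
    and "\<epsilon> > 0"
  shows "\<exists>\<delta>>0. \<forall>M M'. row_stochastic M \<longrightarrow> row_stochastic M' \<longrightarrow> (\<forall>i j. \<bar>M $ i $ j - M' $ i $ j\<bar> \<le> \<delta>) \<longrightarrow>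
    (\<forall>x\<in>X. \<forall>y\<in>X. norm ((pseudo_gradient M G x - pseudo_gradient M' G x)
        - (pseudo_gradient M G y - pseudo_gradient M' G y)) \<le> \<epsilon> * norm (x - y))"
proof -
  define N where "N = real CARD('i)"
  have "\<epsilon> / N > 0"
    using \<open>\<epsilon> > 0\<close> by (simp add: N_def)
  then have "\<exists>\<delta>>0. \<forall>M M'. row_stochastic M \<longrightarrow> row_stochastic M' \<longrightarrow> (\<forall>j. \<bar>M $ i $ j - M' $ i $ j\<bar> \<le> \<delta>) \<longrightarrow>
      (\<forall>x\<in>X. \<forall>y\<in>X. norm ((pseudo_gradient M G x - pseudo_gradient M' G x) $ i
        - (pseudo_gradient M G y - pseudo_gradient M' G y) $ i) \<le> \<epsilon> / N * norm (x - y))" for i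
    by (intro pseudo_gradient_component_perturbation[where K = "K i"]) (use assms in auto)
  then obtain \<delta>i where \<delta>i_pos: "\<And>i. \<delta>i i > 0"
    and \<delta>i: "\<And>i M M' x y. row_stochastic M \<Longrightarrow> row_stochastic M' \<Longrightarrow> (\<forall>j. \<bar>M $ i $ j - M' $ i $ j\<bar> \<le> \<delta>i i) \<Longrightarrow>
      x \<in> X \<Longrightarrow> y \<in> X \<Longrightarrow> norm ((pseudo_gradient M G x - pseudo_gradient M' G x) $ i
        - (pseudo_gradient M G y - pseudo_gradient M' G y) $ i) \<le> \<epsilon> / N * norm (x - y)"
    by metis
  define \<delta> where "\<delta> = Min (range \<delta>i)"
  have "\<delta> > 0" and "\<And>i. \<delta> \<le> \<delta>i i"
    unfolding \<delta>_def using \<delta>i_pos by auto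
  show ?thesis
  proof (intro exI[of _ \<delta>] conjI allI impI ballI \<open>\<delta> > 0\<close>)
    fix M M' :: "real^'i^'i" and x y
    assume "row_stochastic M" "row_stochastic M'" and close: "\<forall>i j. \<bar>M $ i $ j - M' $ i $ j\<bar> \<le> \<delta>"
      and "x \<in> X" "y \<in> X"
    have "norm ((pseudo_gradient M G x - pseudo_gradient M' G x) - (pseudo_gradient M G y - pseudo_gradient M' G y))
        \<le> (\<Sum>i\<in>UNIV. norm ((pseudo_gradient M G x - pseudo_gradient M' G x) $ i
              - (pseudo_gradient M G y - pseudo_gradient M' G y) $ i))"
      using norm_vec_le_sum[of "(pseudo_gradient M G x - pseudo_gradient M' G x)
          - (pseudo_gradient M G y - pseudo_gradient M' G y)"] by simp
    also have "\<dots> \<le> (\<Sum>i\<in>(UNIV::'i set). \<epsilon> / N * norm (x - y))"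
      using close \<open>\<And>i. \<delta> \<le> \<delta>i i\<close> \<open>row_stochastic M\<close> \<open>row_stochastic M'\<close> \<open>x \<in> X\<close> \<open>y \<in> X\<close>
      by (intro sum_mono \<delta>i) (auto intro: order_trans)
    also have "\<dots> = \<epsilon> * norm (x - y)"
      by (simp add: N_def)
    finally show "norm ((pseudo_gradient M G x - pseudo_gradient M' G x)
        - (pseudo_gradient M G y - pseudo_gradient M' G y)) \<le> \<epsilon> * norm (x - y)" .
  qed
qed

lemma strongly_monotone_on_pseudo_gradient_near:
  fixes X :: "(real^'n::finite^'i::finite) set"
    and G :: "'i \<Rightarrow> (real^'n) \<times> (real^'n) \<Rightarrow> (real^'n) \<times> (real^'n)"
  assumes "convex X" and "bounded X" and "\<And>i. compact (K i)" and "\<And>i. C1_map_on (K i) (G i)"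
    and "\<And>M i x. row_stochastic M \<Longrightarrow> x \<in> X \<Longrightarrow> local_view M i x \<in> K i"
    and "row_stochastic M0" and "strongly_monotone_on X (pseudo_gradient M0 G)"
  shows "\<exists>\<delta>>0. \<forall>M. row_stochastic M \<longrightarrow> (\<forall>i j. \<bar>M $ i $ j - M0 $ i $ j\<bar> \<le> \<delta>) \<longrightarrow>
    strongly_monotone_on X (pseudo_gradient M G)"
proof -
  obtain \<alpha> where "\<alpha> > 0"
    and mono: "\<forall>x\<in>X. \<forall>y\<in>X. \<alpha> * (norm (x - y))\<^sup>2 \<le> (pseudo_gradient M0 G x - pseudo_gradient M0 G y) \<bullet> (x - y)"
    using assms(7) unfolding strongly_monotone_on_def by blast
  then obtain \<delta> where "\<delta> > 0" and perturbation: "\<And>M. row_stochastic M \<Longrightarrow> (\<forall>i j. \<bar>M $ i $ j - M0 $ i $ j\<bar> \<le> \<delta>) \<Longrightarrow>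
      \<forall>x\<in>X. \<forall>y\<in>X. norm ((pseudo_gradient M G x - pseudo_gradient M0 G x)
        - (pseudo_gradient M G y - pseudo_gradient M0 G y)) \<le> \<alpha> / 2 * norm (x - y)"
    using pseudo_gradient_perturbation[OF assms(1-5), of "\<alpha> / 2"] assms(6) by force
  have "strongly_monotone_on X (\<lambda>x. pseudo_gradient M0 G x + (pseudo_gradient M G x - pseudo_gradient M0 G x))"
    if "row_stochastic M" and "\<forall>i j. \<bar>M $ i $ j - M0 $ i $ j\<bar> \<le> \<delta>" for M
    using strongly_monotone_on_add_lipschitz[OF mono perturbation[OF that]] \<open>\<alpha> > 0\<close> by simp
  then show ?thesis
    using \<open>\<delta> > 0\<close> by auto
qed

theorem lemma2:
  fixes Xs :: "'i::finite \<Rightarrow> (real^'n::finite) set"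
    and J :: "'i \<Rightarrow> (real^'n) \<times> (real^'n) \<Rightarrow> real"
    and G :: "'i \<Rightarrow> (real^'n) \<times> (real^'n) \<Rightarrow> (real^'n) \<times> (real^'n)"
    and T :: "real^'i^'i"
  defines "X \<equiv> {x :: real^'n^'i. \<forall>i. x $ i \<in> Xs i}"
    and "C \<equiv> convex hull (\<Union>j. Xs j)"
  assumes Xs_convex: "\<And>i. convex (Xs i)"
    and Xs_compact: "\<And>i. compact (Xs i)"
    and Xs_interior: "\<And>i. interior (Xs i) \<noteq> {}"
    and J_C1: "\<And>i. C1_grad_on (Xs i \<times> C) (J i) (G i)"
    and J_convex: "\<And>i x. x \<in> X \<Longrightarrow>
                 convex_on (Xs i) (\<lambda>t. J i (t, sigma_inf (\<chi> j. if j = i then t else x $ j)))"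
    and T_range: "\<And>i j. 0 \<le> T $ i $ j \<and> T $ i $ j \<le> 1"
    and A1: "primitive T \<and> doubly_stochastic T"
    and A3_C2: "\<And>i. C1_map_on (Xs i \<times> C) (G i)"
    and A3_smon: "strongly_monotone_on X (F_inf G)"
  shows "\<exists>\<nu>0::nat. \<forall>\<nu>>\<nu>0. strongly_monotone_on X (F_nu T \<nu> G)"
proof -
  have "convex X"
    using Xs_convex unfolding X_def convex_def by auto
  moreover have "bounded X"
    unfolding X_def by (rule bounded_vec_componentwise) (use Xs_compact compact_imp_bounded in auto)
  moreover have "compact (Xs i \<times> C)" for i
    unfolding C_def using Xs_compact by (intro compact_Times compact_convex_hull) auto
  moreover have "local_view M i x \<in> Xs i \<times> C" if "row_stochastic M" and "x \<in> X" for M i x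
    using local_view_mem_Times_convex_hull that unfolding X_def C_def by blast
  ultimately obtain \<delta> where "\<delta> > 0" and near: "\<And>M. row_stochastic M \<Longrightarrow>
      (\<forall>i j. \<bar>M $ i $ j - averaging_matrix $ i $ j\<bar> \<le> \<delta>) \<Longrightarrow> strongly_monotone_on X (pseudo_gradient M G)"
    using strongly_monotone_on_pseudo_gradient_near[of X "\<lambda>i. Xs i \<times> C" G averaging_matrix]
      A3_C2 A3_smon row_stochastic_averaging_matrix by (auto simp: F_inf_eq_pseudo_gradient)
  have "(\<lambda>\<nu>. matpow T \<nu>) \<longlonglongrightarrow> averaging_matrix"
    using A1 unfolding primitive_def by (intro matpow_tendsto_averaging_matrix) auto
  from tendstoD[OF this \<open>\<delta> > 0\<close>]
  have "\<forall>\<^sub>F \<nu> in sequentially. \<forall>i j. \<bar>matpow T \<nu> $ i $ j - averaging_matrix $ i $ j\<bar> \<le> \<delta>"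
    by (rule eventually_mono)
      (metis abs_matrix_entry_le_norm dist_norm less_imp_le order_trans vector_minus_component)
  then obtain \<nu>0 where "\<And>\<nu> i j. \<nu> \<ge> \<nu>0 \<Longrightarrow> \<bar>matpow T \<nu> $ i $ j - averaging_matrix $ i $ j\<bar> \<le> \<delta>"
    unfolding eventually_sequentially by blast
  moreover have "row_stochastic (matpow T \<nu>)" for \<nu>
    using A1 row_stochastic_matpow by (auto simp: doubly_stochastic_iff)
  ultimately show ?thesis
    unfolding F_nu_eq_pseudo_gradient using near less_imp_le by blast
qed

end
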